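(* Let $g:\mathbb{R}^N\to\mathbb{R}$ and a family of random functions $g(\theta,\xi)$ differentiable in $\theta$ be given. Given $\theta_1,v_0\in\mathbb{R}^N$, define for $n\ge1$: $v_n=\alpha v_{n-1}+\epsilon_n\nabla_\theta g(\theta_n,\xi_n)$, $\theta_{n+1}=\theta_n-v_n$. Assume: (i) the $\xi_n$ are mutually independent and independent of $\theta_1,v_0$, and $g(x)=\mathbb{E}_{\xi_n}(g(x,\xi_n))$ for all $x$, $n$; (ii) $g$ is non-negative and continuously differentiable; $\{\theta:\nabla g(\theta)=0\}\ne\emptyset$; $\|\nabla g(x)-\nabla g(y)\|\le c\|x-y\|$ for some $c>0$; and there is $M>0$ with $\mathbb{E}_{\xi_n}\big(\|\nabla_\theta g(\theta)-\nabla_\theta g(\theta,\xi_n)\|^2\big)\le M(1+g(\theta))$ for all $\theta$, $n$; (iii) $\alpha\in[0,1)$, and $\epsilon_n>0$ decreases monotonically to $0$ with $\sum\epsilon_n=\infty$, $\sum\epsilon_n^2<\infty$. Then $\sum_{n=0}^{\infty}\mathbb{E}\big(\|v_n\|^2\big)<c(v_0,\theta_1)$ for a constant $c(v_0,\theta_1)$ depending only on $v_0$ and $\theta_1$, and $\sum_{n=0}^\infty\|v_n\|^2<+\infty$ almost surely.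
   Context: $\|\cdot\|$ is the Euclidean norm; $\mathbb{E}_{\xi_n}$ denotes expectation with respect to $\xi_n$ only. *)

theory Defs
  imports "HOL-Probability.Probability"
begin

text \<open>Heavy-ball stochastic gradient iteration.
  hb_iter alpha eps DG theta1 v0 xi omega n = (theta_(n+1), v_n), where
  v_0 = v0, theta_1 = theta1 and for n >= 1:
  v_n = alpha v_(n-1) + eps_n DG(theta_n, xi_n), theta_(n+1) = theta_n - v_n.\<close>

fun hb_iter :: "real \<Rightarrow> (nat \<Rightarrow> real) \<Rightarrow> ('a::real_vector \<Rightarrow> 'b \<Rightarrow> 'a)
    \<Rightarrow> 'a \<Rightarrow> 'a \<Rightarrow> (nat \<Rightarrow> 'w \<Rightarrow> 'b) \<Rightarrow> 'w \<Rightarrow> nat \<Rightarrow> 'a \<times> 'a" where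
  "hb_iter alpha eps DG theta1 v0 xi w 0 = (theta1, v0)"
| "hb_iter alpha eps DG theta1 v0 xi w (Suc n) =
     (let (th, v) = hb_iter alpha eps DG theta1 v0 xi w n;
          v' = alpha *\<^sub>R v + eps (Suc n) *\<^sub>R DG th (xi (Suc n) w)
      in (th - v', v'))"

definition hb_v where
  "hb_v alpha eps DG theta1 v0 xi w n = snd (hb_iter alpha eps DG theta1 v0 xi w n)"

definition hb_theta where
  "hb_theta alpha eps DG theta1 v0 xi w n = fst (hb_iter alpha eps DG theta1 v0 xi w (n - 1))"

end

theory Submission
  imports Defs
begin

(* In the shifted coordinate z = theta - alpha / (1 - alpha) v the heavy-ball step becomes a plain
   stochastic gradient step z' = z - eps / (1 - alpha) DG(theta, xi), with the gradient sampled at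
   theta instead of z. The descent lemma for the c-Lipschitz gradient, the variance bound and
   |Dg|^2 <= 2 c g therefore give, for L(theta, v) = g z + K |v|^2 with K large enough,
     E[L_(n+1) | xi_1, ..., xi_n] <= (1 + a eps_(n+1)^2) L_n + b eps_(n+1)^2,
   and since sum eps_n^2 < oo a discrete Gronwall argument bounds E L_n uniformly. This bounds the
   second moments of the sampled gradients by some D, so taking expectations in
     |v_(n+1)|^2 <= alpha |v_n|^2 + eps_(n+1)^2 / (1 - alpha) |DG(theta_(n+1), xi_(n+1))|^2
   and summing gives (1 - alpha) sum E|v_n|^2 <= |v_0|^2 + D sum eps_n^2 / (1 - alpha).
   A nonnegative series with finite expected sum converges almost surely. *)

lemma lipschitz_gradient_upper_bound:
  fixes g :: "'a::real_inner \<Rightarrow> real"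
  assumes g_diff: "\<And>x. (g has_derivative (\<lambda>h. Dg x \<bullet> h)) (at x)"
    and Lip: "\<And>x y. norm (Dg x - Dg y) \<le> c * norm (x - y)"
  shows "g y \<le> g x + Dg x \<bullet> (y - x) + c / 2 * (norm (y - x))\<^sup>2"
proof -
  define u where "u = y - x"
  define h where "h t = g (x + t *\<^sub>R u) - t * (Dg x \<bullet> u) - c / 2 * t\<^sup>2 * (norm u)\<^sup>2" for t
  have "h 1 \<le> h 0"
  proof (rule DERIV_nonpos_imp_nonincreasing[of 0 1 h])
    fix t :: real assume t: "0 \<le> t" "t \<le> 1"
    have "((\<lambda>t. g (x + t *\<^sub>R u)) has_derivative (\<lambda>s. Dg (x + t *\<^sub>R u) \<bullet> (s *\<^sub>R u))) (at t)"
      by (rule has_derivative_compose[OF _ g_diff]) (auto intro!: derivative_eq_intros)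
    then have "((\<lambda>t. g (x + t *\<^sub>R u)) has_real_derivative Dg (x + t *\<^sub>R u) \<bullet> u) (at t)"
      by (simp add: has_field_derivative_def mult_commute_abs)
    then have "(h has_real_derivative (Dg (x + t *\<^sub>R u) - Dg x) \<bullet> u - c * t * (norm u)\<^sup>2) (at t)"
      unfolding h_def
      by (auto intro!: derivative_eq_intros simp: power2_eq_square algebra_simps inner_diff_left)
    moreover have "(Dg (x + t *\<^sub>R u) - Dg x) \<bullet> u \<le> c * t * (norm u)\<^sup>2"
    proof -
      have "(Dg (x + t *\<^sub>R u) - Dg x) \<bullet> u \<le> norm (Dg (x + t *\<^sub>R u) - Dg x) * norm u"
        by (rule norm_cauchy_schwarz)
      also have "\<dots> \<le> c * norm (t *\<^sub>R u) * norm u"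
        using Lip[of "x + t *\<^sub>R u" x] by (simp add: mult_right_mono)
      finally show ?thesis using t by (simp add: power2_eq_square)
    qed
    ultimately show "\<exists>y. (h has_real_derivative y) (at t) \<and> y \<le> 0" by force
  qed simp
  then show ?thesis unfolding h_def u_def by (simp add: algebra_simps)
qed

lemma nonneg_lipschitz_gradient_sq_norm_le:
  fixes g :: "'a::real_inner \<Rightarrow> real"
  assumes g_diff: "\<And>x. (g has_derivative (\<lambda>h. Dg x \<bullet> h)) (at x)"
    and Lip: "\<And>x y. norm (Dg x - Dg y) \<le> c * norm (x - y)"
    and c_pos: "c > 0" and g_nonneg: "\<And>x. g x \<ge> 0"
  shows "(norm (Dg x))\<^sup>2 \<le> 2 * c * g x"
proof -
  \<comment> \<open>one gradient step of length \<open>1 / c\<close> from \<open>x\<close> decreases \<open>g\<close> by \<open>\<parallel>Dg x\<parallel>\<^sup>2 / (2 c)\<close>\<close>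
  have "0 \<le> g (x - (1 / c) *\<^sub>R Dg x)" by (rule g_nonneg)
  also have "\<dots> \<le> g x - (norm (Dg x))\<^sup>2 / (2 * c)"
    using lipschitz_gradient_upper_bound[OF g_diff Lip, of "x - (1 / c) *\<^sub>R Dg x" x] c_pos
    by (simp add: dot_square_norm power_mult_distrib power2_eq_square field_simps)
  finally show ?thesis using c_pos by (simp add: field_simps)
qed

lemma nonneg_lipschitz_gradient_shift_le:
  fixes g :: "'a::real_inner \<Rightarrow> real"
  assumes g_diff: "\<And>x. (g has_derivative (\<lambda>h. Dg x \<bullet> h)) (at x)"
    and Lip: "\<And>x y. norm (Dg x - Dg y) \<le> c * norm (x - y)"
    and c_pos: "c > 0" and g_nonneg: "\<And>x. g x \<ge> 0"
  shows "g (z + w) \<le> 2 * g z + c * (norm w)\<^sup>2"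
proof -
  have "g (z + w) \<le> g z + Dg z \<bullet> w + c / 2 * (norm w)\<^sup>2"
    using lipschitz_gradient_upper_bound[OF g_diff Lip, of "z + w" z] by simp
  also have "Dg z \<bullet> w \<le> norm (Dg z) * norm w" by (rule norm_cauchy_schwarz)
  also have "norm (Dg z) * norm w \<le> (norm (Dg z))\<^sup>2 / (2 * c) + c / 2 * (norm w)\<^sup>2"
  proof -
    have "0 \<le> (norm (Dg z) - c * norm w)\<^sup>2 / (2 * c)" using c_pos by simp
    then show ?thesis using c_pos by (simp add: power2_eq_square field_simps)
  qed
  also have "(norm (Dg z))\<^sup>2 / (2 * c) \<le> g z"
    using nonneg_lipschitz_gradient_sq_norm_le[OF assms, of z] c_pos by (simp add: field_simps)
  finally show ?thesis by simp
qed

lemma norm_sq_add_le: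
  fixes x y :: "'a::real_normed_vector"
  shows "(norm (x + y))\<^sup>2 \<le> 2 * (norm x)\<^sup>2 + 2 * (norm y)\<^sup>2"
proof -
  have "(norm (x + y))\<^sup>2 \<le> (norm x + norm y)\<^sup>2"
    by (simp add: norm_triangle_ineq power_mono)
  also have "\<dots> \<le> 2 * (norm x)\<^sup>2 + 2 * (norm y)\<^sup>2"
    using zero_le_power2[of "norm x - norm y"] unfolding power2_sum power2_diff by linarith
  finally show ?thesis .
qed

lemma norm_sq_scaleR_add_le:
  fixes x y :: "'a::real_normed_vector"
  assumes "0 \<le> a" "a < 1" "0 \<le> e"
  shows "(norm (a *\<^sub>R x + e *\<^sub>R y))\<^sup>2 \<le> a * (norm x)\<^sup>2 + e\<^sup>2 / (1 - a) * (norm y)\<^sup>2"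
proof -
  define s t where "s = norm x" and "t = e / (1 - a) * norm y"
  \<comment> \<open>\<open>e y = (1 - a) ((e / (1 - a)) y)\<close>, and the square is convex\<close>
  have "(norm (a *\<^sub>R x + e *\<^sub>R y))\<^sup>2 \<le> (a * s + (1 - a) * t)\<^sup>2"
    using assms norm_triangle_ineq[of "a *\<^sub>R x" "e *\<^sub>R y"] by (intro power_mono) (auto simp: s_def t_def)
  also have "\<dots> \<le> a * s\<^sup>2 + (1 - a) * t\<^sup>2"
  proof -
    have "0 \<le> a * (1 - a) * (s - t)\<^sup>2" using assms by simp
    then show ?thesis by (simp add: power2_eq_square algebra_simps)
  qed
  also have "(1 - a) * t\<^sup>2 = e\<^sup>2 / (1 - a) * (norm y)\<^sup>2"
    using assms by (simp add: t_def power_mult_distrib power_divide power2_eq_square)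
  finally show ?thesis by (simp add: s_def)
qed

lemma inner_ge_of_norm_diff_le:
  fixes p q :: "'a::real_inner"
  assumes "norm (p - q) \<le> b"
  shows "- b\<^sup>2 / 4 \<le> p \<bullet> q"
proof -
  have "4 * (p \<bullet> q) = (norm (p + q))\<^sup>2 - (norm (p - q))\<^sup>2"
    by (simp add: power2_norm_eq_inner algebra_simps inner_commute)
  moreover have "(norm (p - q))\<^sup>2 \<le> b\<^sup>2"
    using assms by (simp add: power_mono)
  ultimately show ?thesis using zero_le_power2[of "norm (p + q)"] by linarith
qed

section \<open>Linear recurrences in ennreal\<close>

lemma discrete_gronwall_ennreal:
  fixes x :: "nat \<Rightarrow> ennreal" and a b :: "nat \<Rightarrow> real"
  assumes a: "\<And>n. 0 \<le> a n" and b: "\<And>n. 0 \<le> b n"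
    and step: "\<And>n. x (Suc n) \<le> ennreal (1 + a n) * x n + ennreal (b n)"
  shows "x n \<le> ennreal (exp (\<Sum>i<n. a i)) * (x 0 + ennreal (\<Sum>i<n. b i))"
proof (induction n)
  case 0
  then show ?case by simp
next
  case (Suc n)
  define E where "E = exp (\<Sum>i<n. a i)"
  define B where "B = (\<Sum>i<n. b i)"
  have E: "1 \<le> E" and B: "0 \<le> B"
    using a b by (simp_all add: E_def B_def sum_nonneg)
  have "x (Suc n) \<le> ennreal (1 + a n) * (ennreal E * (x 0 + ennreal B)) + ennreal (b n)"
    using Suc.IH by (intro order_trans[OF step] add_mono mult_left_mono) (auto simp: E_def B_def)
  also have "\<dots> \<le> ennreal (exp (a n) * E) * (x 0 + ennreal B) + ennreal (exp (a n) * E) * ennreal (b n)"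
  proof (intro add_mono)
    have "ennreal (1 + a n) * ennreal E = ennreal ((1 + a n) * E)"
      using a[of n] E by (simp add: ennreal_mult)
    also have "\<dots> \<le> ennreal (exp (a n) * E)"
      using E by (intro ennreal_leI mult_right_mono) (auto simp: exp_ge_add_one_self)
    finally show "ennreal (1 + a n) * (ennreal E * (x 0 + ennreal B)) \<le> ennreal (exp (a n) * E) * (x 0 + ennreal B)"
      by (simp add: mult.assoc[symmetric] mult_right_mono)
    have "1 \<le> exp (a n) * E"
      using a[of n] E mult_mono[of 1 "exp (a n)" 1 E] by simp
    then show "ennreal (b n) \<le> ennreal (exp (a n) * E) * ennreal (b n)"
      using b[of n] mult_right_mono[of 1 "exp (a n) * E" "b n"] by (simp add: ennreal_leI flip: ennreal_mult)
  qed
  also have "\<dots> = ennreal (exp (\<Sum>i<Suc n. a i)) * (x 0 + ennreal (\<Sum>i<Suc n. b i))"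
    using b[of n] B by (simp add: E_def B_def exp_add algebra_simps)
  finally show ?case .
qed

lemma discrete_gronwall_ennreal_summable:
  fixes x :: "nat \<Rightarrow> ennreal" and a b :: "nat \<Rightarrow> real"
  assumes a: "\<And>n. 0 \<le> a n" "summable a" and b: "\<And>n. 0 \<le> b n" "summable b"
    and step: "\<And>n. x (Suc n) \<le> ennreal (1 + a n) * x n + ennreal (b n)"
  shows "x n \<le> ennreal (exp (\<Sum>i. a i)) * (x 0 + ennreal (\<Sum>i. b i))"
proof -
  have "exp (\<Sum>i<n. a i) \<le> exp (\<Sum>i. a i)" and "(\<Sum>i<n. b i) \<le> (\<Sum>i. b i)"
    using a b by (simp_all add: sum_le_suminf)
  then have "ennreal (exp (\<Sum>i<n. a i)) * (x 0 + ennreal (\<Sum>i<n. b i))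
      \<le> ennreal (exp (\<Sum>i. a i)) * (x 0 + ennreal (\<Sum>i. b i))"
    by (intro mult_mono add_mono ennreal_leI) auto
  with discrete_gronwall_ennreal[where x=x and a=a and b=b, OF a(1) b(1) step] show ?thesis
    by (rule order_trans)
qed

lemma suminf_contraction_ennreal_le:
  fixes x b :: "nat \<Rightarrow> ennreal"
  assumes alpha: "0 \<le> alpha" "alpha < 1"
    and step: "\<And>n. x (Suc n) \<le> ennreal alpha * x n + b n"
  shows "ennreal (1 - alpha) * (\<Sum>n. x n) \<le> x 0 + (\<Sum>n. b n)"
proof -
  have split: "ennreal (1 - alpha) * y + ennreal alpha * y = y" for y
    using alpha by (simp add: distrib_right[symmetric] flip: ennreal_plus)
  have telescope: "ennreal (1 - alpha) * (\<Sum>n<Suc N. x n) + ennreal alpha * x N \<le> x 0 + (\<Sum>n<N. b n)" for N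
  proof (induction N)
    case 0
    then show ?case by (simp add: split)
  next
    case (Suc N)
    have "ennreal (1 - alpha) * (\<Sum>n<Suc (Suc N). x n) + ennreal alpha * x (Suc N)
        = ennreal (1 - alpha) * (\<Sum>n<Suc N. x n) + x (Suc N)"
      by (simp add: distrib_left add.assoc split)
    also have "\<dots> \<le> ennreal (1 - alpha) * (\<Sum>n<Suc N. x n) + ennreal alpha * x N + b N"
      using step[of N] by (simp add: add.assoc add_left_mono)
    also have "\<dots> \<le> x 0 + (\<Sum>n<Suc N. b n)"
      using Suc.IH by (simp add: add.assoc add_right_mono)
    finally show ?case .
  qed
  have "(\<Sum>n<N. ennreal (1 - alpha) * x n) \<le> x 0 + (\<Sum>n. b n)" for N
  proof -
    have "(\<Sum>n<N. ennreal (1 - alpha) * x n) = ennreal (1 - alpha) * (\<Sum>n<N. x n)"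
      by (simp add: sum_distrib_left)
    also have "\<dots> \<le> ennreal (1 - alpha) * (\<Sum>n<Suc N. x n) + ennreal alpha * x N"
      by (intro add_increasing2 mult_left_mono) auto
    also have "\<dots> \<le> x 0 + (\<Sum>n. b n)"
      using telescope[of N] by (rule order_trans) (simp add: add_left_mono sum_le_suminf)
    finally show ?thesis .
  qed
  then show ?thesis
    by (simp add: suminf_le_const flip: ennreal_suminf_cmult)
qed

lemma AE_summable_of_suminf_nn_integral_finite:
  assumes f: "\<And>n. f n \<in> borel_measurable M" "\<And>n x. 0 \<le> f n x"
    and fin: "(\<Sum>n. \<integral>\<^sup>+x. ennreal (f n x) \<partial>M) < \<infinity>"
  shows "AE x in M. summable (\<lambda>n. f n x)"
proof -
  have "(\<integral>\<^sup>+x. (\<Sum>n. ennreal (f n x)) \<partial>M) \<noteq> \<infinity>"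
    using fin f(1) by (simp add: nn_integral_suminf)
  then have "AE x in M. (\<Sum>n. ennreal (f n x)) \<noteq> \<infinity>"
    using f(1) by (intro nn_integral_PInf_AE) auto
  then show ?thesis
    by eventually_elim (use f(2) in \<open>auto intro: summable_suminf_not_top\<close>)
qed

lemma (in prob_space) indep_var_nn_integral:
  assumes ind: "indep_var N X S Y" and F: "F \<in> borel_measurable (N \<Otimes>\<^sub>M S)"
  shows "(\<integral>\<^sup>+w. F (X w, Y w) \<partial>M) = (\<integral>\<^sup>+w. (\<integral>\<^sup>+y. F (X w, y) \<partial>distr M S Y) \<partial>M)"
proof -
  have X: "X \<in> measurable M N" and Y: "Y \<in> measurable M S"
    and eq: "distr M N X \<Otimes>\<^sub>M distr M S Y = distr M (N \<Otimes>\<^sub>M S) (\<lambda>x. (X x, Y x))"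
    using ind unfolding indep_var_distribution_eq by auto
  interpret PY: prob_space "distr M S Y" using Y by (rule prob_space_distr)
  have F': "F \<in> borel_measurable (distr M N X \<Otimes>\<^sub>M distr M S Y)"
    using F by (simp cong: measurable_cong_sets)
  have "(\<integral>\<^sup>+w. F (X w, Y w) \<partial>M) = integral\<^sup>N (distr M N X \<Otimes>\<^sub>M distr M S Y) F"
    using X Y F by (simp add: eq nn_integral_distr)
  also have "\<dots> = (\<integral>\<^sup>+x. \<integral>\<^sup>+y. F (x, y) \<partial>distr M S Y \<partial>distr M N X)"
    by (rule PY.nn_integral_fst[symmetric, OF F'])
  also have "\<dots> = (\<integral>\<^sup>+w. (\<integral>\<^sup>+y. F (X w, y) \<partial>distr M S Y) \<partial>M)"
    using X PY.borel_measurable_nn_integral_fst[OF F'] by (simp add: nn_integral_distr)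
  finally show ?thesis .
qed

lemma (in prob_space) nn_integral_affine:
  assumes f: "f \<in> borel_measurable M" "\<And>x. 0 \<le> f x" and "0 \<le> a" "0 \<le> b"
  shows "(\<integral>\<^sup>+x. ennreal (a * f x + b) \<partial>M) = ennreal a * (\<integral>\<^sup>+x. ennreal (f x) \<partial>M) + ennreal b"
proof -
  have "(\<integral>\<^sup>+x. ennreal (a * f x + b) \<partial>M) = (\<integral>\<^sup>+x. ennreal a * ennreal (f x) + ennreal b \<partial>M)"
    using assms by (intro nn_integral_cong) (simp add: ennreal_mult ennreal_plus)
  also have "\<dots> = ennreal a * (\<integral>\<^sup>+x. ennreal (f x) \<partial>M) + ennreal b"
    using f(1) by (simp add: nn_integral_linear emeasure_space_1)
  finally show ?thesis .
qed

section \<open>The heavy-ball step\<close>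

definition hb_step :: "real \<Rightarrow> real \<Rightarrow> ('a::real_vector \<Rightarrow> 'b \<Rightarrow> 'a) \<Rightarrow> 'a \<times> 'a \<Rightarrow> 'b \<Rightarrow> 'a \<times> 'a" where
  "hb_step alpha e DG s y = (let v = alpha *\<^sub>R snd s + e *\<^sub>R DG (fst s) y in (fst s - v, v))"

lemma hb_iter_Suc_eq_hb_step:
  "hb_iter alpha eps DG theta1 v0 xi w (Suc n) =
     hb_step alpha (eps (Suc n)) DG (hb_iter alpha eps DG theta1 v0 xi w n) (xi (Suc n) w)"
  by (simp add: split_beta Let_def hb_step_def)

lemma measurable_DG_fst:
  fixes DG :: "'a::euclidean_space \<Rightarrow> 'b \<Rightarrow> 'a"
  assumes DG_meas: "(\<lambda>(th, x). DG th x) \<in> borel_measurable (borel \<Otimes>\<^sub>M S)"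
  shows "(\<lambda>p. DG (fst (fst p)) (snd p)) \<in> borel_measurable ((borel :: ('a \<times> 'a) measure) \<Otimes>\<^sub>M S)"
proof -
  have "(\<lambda>p. (fst (fst p), snd p)) \<in> measurable (((borel :: 'a measure) \<Otimes>\<^sub>M (borel :: 'a measure)) \<Otimes>\<^sub>M S) (borel \<Otimes>\<^sub>M S)"
    by measurable
  from measurable_compose[OF this DG_meas] show ?thesis
    unfolding borel_prod by simp
qed

lemma measurable_hb_step:
  fixes DG :: "'a::euclidean_space \<Rightarrow> 'b \<Rightarrow> 'a"
  assumes DG_meas: "(\<lambda>(th, x). DG th x) \<in> borel_measurable (borel \<Otimes>\<^sub>M S)"
  shows "(\<lambda>p. hb_step alpha e DG (fst p) (snd p)) \<in> borel_measurable ((borel :: ('a \<times> 'a) measure) \<Otimes>\<^sub>M S)"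
proof -
  note [measurable] = measurable_DG_fst[OF DG_meas, unfolded borel_prod[symmetric]]
  show ?thesis
    unfolding hb_step_def Let_def borel_prod[symmetric] by measurable
qed

lemma hb_iter_restrict:
  "n \<le> m \<Longrightarrow> hb_iter alpha eps DG theta1 v0 (\<lambda>i \<omega>. \<omega> i) (restrict (\<lambda>i. xi i w) {1..m}) n
     = hb_iter alpha eps DG theta1 v0 xi w n"
  by (induction n) (simp_all add: hb_iter_Suc_eq_hb_step del: hb_iter.simps(2))

lemma measurable_hb_iter_coordinates:
  fixes DG :: "'a::euclidean_space \<Rightarrow> 'b \<Rightarrow> 'a"
  assumes DG_meas: "(\<lambda>(th, x). DG th x) \<in> borel_measurable (borel \<Otimes>\<^sub>M S)"
  shows "n \<le> m \<Longrightarrow> (\<lambda>\<omega>. hb_iter alpha eps DG theta1 v0 (\<lambda>i \<omega>. \<omega> i) \<omega> n) \<in> borel_measurable (PiM {1..m} (\<lambda>_. S))"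
proof (induction n)
  case 0
  then show ?case by simp
next
  case (Suc n)
  then have "(\<lambda>\<omega>. (hb_iter alpha eps DG theta1 v0 (\<lambda>i \<omega>. \<omega> i) \<omega> n, \<omega> (Suc n))) \<in> measurable (PiM {1..m} (\<lambda>_. S)) (borel \<Otimes>\<^sub>M S)"
    by (intro measurable_Pair) (auto intro: measurable_component_singleton)
  from measurable_compose[OF this measurable_hb_step[OF DG_meas]] show ?case
    by (simp add: hb_iter_Suc_eq_hb_step del: hb_iter.simps(2))
qed

definition hb_lyapunov :: "real \<Rightarrow> real \<Rightarrow> ('a::real_normed_vector \<Rightarrow> real) \<Rightarrow> 'a \<times> 'a \<Rightarrow> real" where
  "hb_lyapunov alpha K g s = g (fst s - (alpha / (1 - alpha)) *\<^sub>R snd s) + K * (norm (snd s))\<^sup>2"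

lemma hb_lyapunov_nonneg: "(\<And>x. 0 \<le> g x) \<Longrightarrow> 0 \<le> K \<Longrightarrow> 0 \<le> hb_lyapunov alpha K g s"
  by (simp add: hb_lyapunov_def)

lemma hb_step_shifted:
  assumes "alpha \<noteq> 1"
  defines "k \<equiv> alpha / (1 - alpha)"
  shows "fst (hb_step alpha e DG s y) - k *\<^sub>R snd (hb_step alpha e DG s y)
    = fst s - k *\<^sub>R snd s - (e / (1 - alpha)) *\<^sub>R DG (fst s) y"
proof -
  have "1 + k = 1 / (1 - alpha)" using assms by (simp add: field_simps)
  then have "(1 + k) *\<^sub>R (alpha *\<^sub>R snd s + e *\<^sub>R DG (fst s) y) = k *\<^sub>R snd s + (e / (1 - alpha)) *\<^sub>R DG (fst s) y"
    using assms by (simp add: k_def scaleR_add_right)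
  then show ?thesis by (simp add: hb_step_def Let_def algebra_simps)
qed

lemma hb_lyapunov_hb_step_le:
  fixes g :: "'a::real_inner \<Rightarrow> real" and th v :: 'a
  assumes g_diff: "\<And>x. (g has_derivative (\<lambda>h. Dg x \<bullet> h)) (at x)"
    and Lip: "\<And>x y. norm (Dg x - Dg y) \<le> c * norm (x - y)"
    and alpha: "0 \<le> alpha" "alpha < 1" and e: "0 \<le> e" and K: "0 \<le> K"
  defines "z \<equiv> th - (alpha / (1 - alpha)) *\<^sub>R v" and "eta \<equiv> e / (1 - alpha)"
  shows "hb_lyapunov alpha K g (hb_step alpha e DG (th, v) y)
    \<le> g z - eta * (Dg z \<bullet> DG th y) + e\<^sup>2 * (c / (2 * (1 - alpha)\<^sup>2) + K / (1 - alpha)) * (norm (DG th y))\<^sup>2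
      + K * alpha * (norm v)\<^sup>2"
proof -
  have "hb_lyapunov alpha K g (hb_step alpha e DG (th, v) y)
      = g (z - eta *\<^sub>R DG th y) + K * (norm (alpha *\<^sub>R v + e *\<^sub>R DG th y))\<^sup>2"
    using alpha unfolding hb_lyapunov_def hb_step_shifted[of alpha, OF less_imp_neq[OF alpha(2)]]
    by (simp add: z_def eta_def hb_step_def Let_def)
  also have "\<dots> \<le> (g z + Dg z \<bullet> (- eta *\<^sub>R DG th y) + c / 2 * (norm (- eta *\<^sub>R DG th y))\<^sup>2)
      + K * (alpha * (norm v)\<^sup>2 + e\<^sup>2 / (1 - alpha) * (norm (DG th y))\<^sup>2)"
    using lipschitz_gradient_upper_bound[OF g_diff Lip, of "z - eta *\<^sub>R DG th y" z]
      norm_sq_scaleR_add_le[OF alpha e] K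
    by (intro add_mono mult_left_mono) auto
  also have "\<dots> = g z - eta * (Dg z \<bullet> DG th y) + e\<^sup>2 * (c / (2 * (1 - alpha)\<^sup>2) + K / (1 - alpha)) * (norm (DG th y))\<^sup>2
      + K * alpha * (norm v)\<^sup>2"
    using alpha by (simp add: eta_def power_mult_distrib power_divide algebra_simps)
  finally show ?thesis .
qed

locale noisy_gradient = prob_space mu for mu :: "'b measure" +
  fixes g :: "'a::euclidean_space \<Rightarrow> real" and Dg :: "'a \<Rightarrow> 'a" and DG :: "'a \<Rightarrow> 'b \<Rightarrow> 'a"
    and c Mv :: real
  assumes DG_int: "\<And>x. integrable mu (DG x)"
    and Dg_mean: "\<And>x. Dg x = (\<integral>y. DG x y \<partial>mu)"
    and variance_le: "\<And>th. (\<integral>\<^sup>+y. ennreal ((norm (Dg th - DG th y))\<^sup>2) \<partial>mu) \<le> ennreal (Mv * (1 + g th))"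
    and g_nonneg: "\<And>x. g x \<ge> 0"
    and g_diff: "\<And>x. (g has_derivative (\<lambda>h. Dg x \<bullet> h)) (at x)"
    and Lip: "\<And>x y. norm (Dg x - Dg y) \<le> c * norm (x - y)"
    and c_pos: "c > 0" and Mv_pos: "Mv > 0"
begin

lemma nn_integral_sq_norm_DG_le:
  "(\<integral>\<^sup>+y. ennreal ((norm (DG th y))\<^sup>2) \<partial>mu) \<le> ennreal (2 * (norm (Dg th))\<^sup>2 + 2 * Mv * (1 + g th))"
proof -
  have [measurable]: "DG th \<in> borel_measurable mu"
    using DG_int by (rule borel_measurable_integrable)
  have "(\<integral>\<^sup>+y. ennreal ((norm (DG th y))\<^sup>2) \<partial>mu)
      \<le> (\<integral>\<^sup>+y. ennreal (2 * (norm (Dg th))\<^sup>2) + ennreal (2 * (norm (Dg th - DG th y))\<^sup>2) \<partial>mu)"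
    using norm_sq_add_le[of "Dg th" "DG th _ - Dg th"]
    by (intro nn_integral_mono) (simp add: norm_minus_commute flip: ennreal_plus)
  also have "\<dots> = ennreal (2 * (norm (Dg th))\<^sup>2) + 2 * (\<integral>\<^sup>+y. ennreal ((norm (Dg th - DG th y))\<^sup>2) \<partial>mu)"
    by (simp add: nn_integral_add nn_integral_cmult emeasure_space_1 ennreal_mult')
  also have "\<dots> \<le> ennreal (2 * (norm (Dg th))\<^sup>2) + 2 * ennreal (Mv * (1 + g th))"
    by (intro add_left_mono mult_left_mono variance_le) simp
  also have "\<dots> = ennreal (2 * (norm (Dg th))\<^sup>2 + 2 * Mv * (1 + g th))"
    using Mv_pos g_nonneg[of th] by (subst ennreal_plus) (auto simp: ennreal_mult mult.assoc)
  finally show ?thesis .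
qed

lemma integrable_sq_norm_DG: "integrable mu (\<lambda>y. (norm (DG th y))\<^sup>2)"
proof (rule integrableI_bounded)
  show "(\<lambda>y. (norm (DG th y))\<^sup>2) \<in> borel_measurable mu"
    using borel_measurable_integrable[OF DG_int] by measurable
  show "(\<integral>\<^sup>+y. ennreal (norm ((norm (DG th y))\<^sup>2)) \<partial>mu) < \<infinity>"
    using nn_integral_sq_norm_DG_le[of th] by (simp add: le_less_trans)
qed

lemma integral_sq_norm_DG_le: "(\<integral>y. (norm (DG th y))\<^sup>2 \<partial>mu) \<le> (4 * c + 2 * Mv) * g th + 2 * Mv"
proof -
  have "ennreal (\<integral>y. (norm (DG th y))\<^sup>2 \<partial>mu) = (\<integral>\<^sup>+y. ennreal ((norm (DG th y))\<^sup>2) \<partial>mu)"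
    by (simp add: nn_integral_eq_integral[OF integrable_sq_norm_DG])
  also have "\<dots> \<le> ennreal (2 * (norm (Dg th))\<^sup>2 + 2 * Mv * (1 + g th))"
    by (rule nn_integral_sq_norm_DG_le)
  finally have "(\<integral>y. (norm (DG th y))\<^sup>2 \<partial>mu) \<le> 2 * (norm (Dg th))\<^sup>2 + 2 * Mv * (1 + g th)"
    using Mv_pos g_nonneg[of th] by (subst (asm) ennreal_le_iff) auto
  also have "\<dots> \<le> (4 * c + 2 * Mv) * g th + 2 * Mv"
    using nonneg_lipschitz_gradient_sq_norm_le[OF g_diff Lip c_pos g_nonneg, of th]
    by (simp add: algebra_simps)
  finally show ?thesis .
qed

lemma integral_sq_norm_DG_le_hb_lyapunov:
  assumes "0 \<le> alpha" "alpha < 1" "K > 0"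
  defines "k \<equiv> alpha / (1 - alpha)"
  shows "(\<integral>y. (norm (DG (fst s) y))\<^sup>2 \<partial>mu)
    \<le> (4 * c + 2 * Mv) * (2 + c * k\<^sup>2 / K) * hb_lyapunov alpha K g s + 2 * Mv"
proof -
  define z where "z = fst s - k *\<^sub>R snd s"
  have k0: "0 \<le> k" using assms by (simp add: k_def)
  have "g (fst s) \<le> 2 * g z + c * (norm (k *\<^sub>R snd s))\<^sup>2"
    using nonneg_lipschitz_gradient_shift_le[OF g_diff Lip c_pos g_nonneg, of z "k *\<^sub>R snd s"]
    by (simp add: z_def)
  also have "\<dots> = 2 * g z + c * k\<^sup>2 / K * (K * (norm (snd s))\<^sup>2)"
    using k0 \<open>K > 0\<close> by (simp add: power_mult_distrib)
  also have "\<dots> \<le> (2 + c * k\<^sup>2 / K) * hb_lyapunov alpha K g s"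
    using assms c_pos g_nonneg[of z]
    by (simp add: hb_lyapunov_def z_def k_def distrib_left distrib_right add_mono)
  finally have "(4 * c + 2 * Mv) * g (fst s) \<le> (4 * c + 2 * Mv) * ((2 + c * k\<^sup>2 / K) * hb_lyapunov alpha K g s)"
    using c_pos Mv_pos by (intro mult_left_mono) auto
  then show ?thesis
    using integral_sq_norm_DG_le[of "fst s"] by (simp add: mult.assoc)
qed

lemma nn_integral_hb_lyapunov_step_le:
  assumes alpha: "0 \<le> alpha" "alpha < 1" and e: "0 \<le> e" and K: "K > 0"
  defines "k \<equiv> alpha / (1 - alpha)"
  assumes K_large: "e * c\<^sup>2 * k\<^sup>2 \<le> 4 * K * (1 - alpha)\<^sup>2"
  shows "(\<integral>\<^sup>+y. ennreal (hb_lyapunov alpha K g (hb_step alpha e DG s y)) \<partial>mu)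
    \<le> ennreal (hb_lyapunov alpha K g s
      + e\<^sup>2 * (c / (2 * (1 - alpha)\<^sup>2) + K / (1 - alpha)) * (\<integral>y. (norm (DG (fst s) y))\<^sup>2 \<partial>mu))"
proof -
  obtain th v where s: "s = (th, v)" by force
  define eta where "eta = e / (1 - alpha)"
  define z where "z = th - k *\<^sub>R v"
  define Q where "Q = e\<^sup>2 * (c / (2 * (1 - alpha)\<^sup>2) + K / (1 - alpha))"
  define R where "R y = g z - eta * (Dg z \<bullet> DG th y) + Q * (norm (DG th y))\<^sup>2 + K * alpha * (norm v)\<^sup>2" for y
  have step_le: "hb_lyapunov alpha K g (hb_step alpha e DG s y) \<le> R y" for y
    using hb_lyapunov_hb_step_le[OF g_diff Lip alpha e, of K] K
    by (simp add: s R_def Q_def z_def eta_def k_def)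
  \<comment> \<open>the gradient is sampled at \<open>th\<close> instead of \<open>z\<close>; \<open>K_large\<close> lets the velocity term absorb the error\<close>
  have "- eta * (Dg z \<bullet> Dg th) \<le> eta * (c * (k * norm v))\<^sup>2 / 4"
  proof -
    have "- (c * (k * norm v))\<^sup>2 / 4 \<le> Dg z \<bullet> Dg th"
      using Lip[of z th] alpha by (intro inner_ge_of_norm_diff_le) (simp add: z_def k_def)
    then have "eta * (- (c * (k * norm v))\<^sup>2 / 4) \<le> eta * (Dg z \<bullet> Dg th)"
      using alpha e by (intro mult_left_mono) (simp_all add: eta_def)
    then show ?thesis by simp
  qed
  also have "\<dots> = e * c\<^sup>2 * k\<^sup>2 * (norm v)\<^sup>2 / (4 * (1 - alpha))"
    by (simp add: eta_def power_mult_distrib mult_ac)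
  also have "\<dots> \<le> 4 * K * (1 - alpha)\<^sup>2 * (norm v)\<^sup>2 / (4 * (1 - alpha))"
    using alpha K_large by (intro divide_right_mono mult_right_mono) auto
  also have "\<dots> = K * (1 - alpha) * (norm v)\<^sup>2"
    using alpha by (simp add: power2_eq_square field_simps)
  finally have cross_term: "- eta * (Dg z \<bullet> Dg th) \<le> K * (1 - alpha) * (norm v)\<^sup>2" .
  have R_int: "integrable mu R"
    unfolding R_def using integrable_sq_norm_DG DG_int by (auto intro: integrable_inner_right)
  have "(\<integral>\<^sup>+y. ennreal (hb_lyapunov alpha K g (hb_step alpha e DG s y)) \<partial>mu) \<le> (\<integral>\<^sup>+y. ennreal (R y) \<partial>mu)"
    using step_le by (intro nn_integral_mono ennreal_leI)
  also have "\<dots> = ennreal (integral\<^sup>L mu R)"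
    using step_le hb_lyapunov_nonneg[of g K, OF g_nonneg] K
    by (intro nn_integral_eq_integral R_int AE_I2) (meson less_imp_le order_trans)
  also have "integral\<^sup>L mu R = g z - eta * (Dg z \<bullet> Dg th) + Q * (\<integral>y. (norm (DG th y))\<^sup>2 \<partial>mu) + K * alpha * (norm v)\<^sup>2"
    unfolding R_def using integrable_sq_norm_DG DG_int[of th]
    by (simp add: Dg_mean[of th] prob_space integrable_inner_right)
  also have "\<dots> \<le> hb_lyapunov alpha K g s + Q * (\<integral>y. (norm (DG th y))\<^sup>2 \<partial>mu)"
    using cross_term by (simp add: hb_lyapunov_def s z_def k_def algebra_simps)
  finally show ?thesis by (simp add: Q_def s ennreal_leI)
qed

end

section \<open>Expected bounds along the iteration\<close>

locale heavy_ball = prob_space M for M :: "'w measure" +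
  fixes S :: "'b measure" and xi :: "nat \<Rightarrow> 'w \<Rightarrow> 'b"
    and g :: "'a::euclidean_space \<Rightarrow> real" and Dg :: "'a \<Rightarrow> 'a" and DG :: "'a \<Rightarrow> 'b \<Rightarrow> 'a"
    and c Mv alpha K :: real and eps :: "nat \<Rightarrow> real" and theta1 v0 :: 'a
  assumes xi_meas: "\<And>n. n \<ge> 1 \<Longrightarrow> xi n \<in> measurable M S"
    and DG_meas: "(\<lambda>(th, x). DG th x) \<in> borel_measurable (borel \<Otimes>\<^sub>M S)"
    and indep: "indep_vars (\<lambda>_. S) xi {1..}"
    and DG_int: "\<And>n x. n \<ge> 1 \<Longrightarrow> integrable (distr M S (xi n)) (DG x)"
    and Dg_mean: "\<And>n x. n \<ge> 1 \<Longrightarrow> Dg x = (\<integral>y. DG x y \<partial>distr M S (xi n))"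
    and variance_le: "\<And>n th. n \<ge> 1 \<Longrightarrow>
        (\<integral>\<^sup>+y. ennreal ((norm (Dg th - DG th y))\<^sup>2) \<partial>distr M S (xi n)) \<le> ennreal (Mv * (1 + g th))"
    and g_nonneg: "\<And>x. g x \<ge> 0"
    and g_diff: "\<And>x. (g has_derivative (\<lambda>h. Dg x \<bullet> h)) (at x)"
    and Lip: "\<And>x y. norm (Dg x - Dg y) \<le> c * norm (x - y)"
    and c_pos: "c > 0" and Mv_pos: "Mv > 0"
    and alpha: "0 \<le> alpha" "alpha < 1"
    and eps_nonneg: "\<And>n. n \<ge> 1 \<Longrightarrow> 0 \<le> eps n"
    and eps_sq: "summable (\<lambda>n. (eps n)\<^sup>2)"
    and K_pos: "K > 0"
    and K_large: "\<And>n. n \<ge> 1 \<Longrightarrow> eps n * c\<^sup>2 * (alpha / (1 - alpha))\<^sup>2 \<le> 4 * K * (1 - alpha)\<^sup>2"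
begin

abbreviation "state n w \<equiv> hb_iter alpha eps DG theta1 v0 xi w n"
abbreviation "law n \<equiv> distr M S (xi n)"
abbreviation "lyapunov \<equiv> hb_lyapunov alpha K g"

lemma noisy_gradient_law: "n \<ge> 1 \<Longrightarrow> noisy_gradient (law n) g Dg DG c Mv"
  by (intro noisy_gradient.intro noisy_gradient_axioms.intro prob_space_distr xi_meas DG_int
      Dg_mean variance_le g_nonneg g_diff Lip c_pos Mv_pos)

lemma measurable_state: "(\<lambda>w. state n w) \<in> borel_measurable M"
proof -
  have "(\<lambda>w. restrict (\<lambda>i. xi i w) {1..n}) \<in> measurable M (PiM {1..n} (\<lambda>_. S))"
    using xi_meas by (intro measurable_restrict) auto
  from measurable_compose[OF this measurable_hb_iter_coordinates[OF DG_meas order_refl]]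
  show ?thesis unfolding hb_iter_restrict[OF order_refl] .
qed

lemma nn_integral_state_next:
  assumes F: "F \<in> borel_measurable ((borel :: ('a \<times> 'a) measure) \<Otimes>\<^sub>M S)"
  shows "(\<integral>\<^sup>+w. F (state m w, xi (Suc m) w) \<partial>M) = (\<integral>\<^sup>+w. (\<integral>\<^sup>+y. F (state m w, y) \<partial>law (Suc m)) \<partial>M)"
proof -
  \<comment> \<open>the state after \<open>m\<close> steps depends only on \<open>\<xi>\<^sub>1, \<dots>, \<xi>\<^sub>m\<close>, which are independent of \<open>\<xi>\<^sub>m\<^sub>+\<^sub>1\<close>\<close>
  have ind: "indep_var (PiM {1..m} (\<lambda>_. S)) (\<lambda>w. restrict (\<lambda>i. xi i w) {1..m})
      (PiM {Suc m} (\<lambda>_. S)) (\<lambda>w. restrict (\<lambda>i. xi i w) {Suc m})"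
    by (rule indep_var_restrict[OF indep]) auto
  have next_meas: "(\<lambda>\<omega>. \<omega> (Suc m)) \<in> measurable (PiM {Suc m} (\<lambda>_. S)) S"
    by (rule measurable_component_singleton) simp
  have "(\<lambda>p. (hb_iter alpha eps DG theta1 v0 (\<lambda>i \<omega>. \<omega> i) (fst p) m, snd p (Suc m)))
      \<in> measurable (PiM {1..m} (\<lambda>_. S) \<Otimes>\<^sub>M PiM {Suc m} (\<lambda>_. S)) (borel \<Otimes>\<^sub>M S)"
    by (intro measurable_Pair measurable_compose[OF measurable_fst measurable_hb_iter_coordinates[OF DG_meas order_refl]]
        measurable_compose[OF measurable_snd next_meas])
  note joint = indep_var_nn_integral[OF ind measurable_compose[OF this F]]
  have F_slice: "(\<lambda>y. F (s, y)) \<in> borel_measurable S" for s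
    using F by measurable
  have "(\<integral>\<^sup>+\<omega>. F (s, \<omega> (Suc m)) \<partial>distr M (PiM {Suc m} (\<lambda>_. S)) (\<lambda>w. restrict (\<lambda>i. xi i w) {Suc m}))
      = (\<integral>\<^sup>+w. F (s, xi (Suc m) w) \<partial>M)" for s
    using xi_meas measurable_compose[OF next_meas F_slice]
    by (subst nn_integral_distr) (auto intro!: measurable_restrict)
  also have "(\<integral>\<^sup>+w. F (s, xi (Suc m) w) \<partial>M) = (\<integral>\<^sup>+y. F (s, y) \<partial>law (Suc m))" for s
    using xi_meas[of "Suc m"] F_slice by (subst nn_integral_distr) auto
  finally have next_integral: "(\<integral>\<^sup>+\<omega>. F (s, \<omega> (Suc m)) \<partial>distr M (PiM {Suc m} (\<lambda>_. S)) (\<lambda>w. restrict (\<lambda>i. xi i w) {Suc m}))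
      = (\<integral>\<^sup>+y. F (s, y) \<partial>law (Suc m))" for s .
  from joint show ?thesis
    unfolding fst_conv snd_conv hb_iter_restrict[OF order_refl] next_integral
    by (simp only: restrict_apply' atLeastAtMost_iff singletonI)
qed

lemma measurable_lyapunov: "lyapunov \<in> borel_measurable borel"
proof -
  have "continuous_on UNIV g"
    using g_diff by (meson continuous_at_imp_continuous_on has_derivative_continuous)
  then have "continuous_on UNIV (\<lambda>s::'a \<times> 'a. g (fst s - (alpha / (1 - alpha)) *\<^sub>R snd s))"
    by (rule continuous_on_compose2) (auto intro!: continuous_intros)
  then have "continuous_on UNIV lyapunov"
    unfolding hb_lyapunov_def by (intro continuous_intros)
  then show ?thesis by (rule borel_measurable_continuous_onI)
qed

lemma conditional_lyapunov_step_le: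
  obtains a b where "0 \<le> a" "0 \<le> b"
    "\<And>n s. n \<ge> 1 \<Longrightarrow> (\<integral>\<^sup>+y. ennreal (lyapunov (hb_step alpha (eps n) DG s y)) \<partial>law n)
      \<le> ennreal ((1 + a * (eps n)\<^sup>2) * lyapunov s + b * (eps n)\<^sup>2)"
proof -
  define q where "q = c / (2 * (1 - alpha)\<^sup>2) + K / (1 - alpha)"
  define C where "C = (4 * c + 2 * Mv) * (2 + c * (alpha / (1 - alpha))\<^sup>2 / K)"
  have q: "0 \<le> q" and C: "0 \<le> C"
    using alpha K_pos c_pos Mv_pos by (simp_all add: q_def C_def)
  have "(\<integral>\<^sup>+y. ennreal (lyapunov (hb_step alpha (eps n) DG s y)) \<partial>law n)
      \<le> ennreal ((1 + q * C * (eps n)\<^sup>2) * lyapunov s + q * (2 * Mv) * (eps n)\<^sup>2)" if n: "n \<ge> 1" for n s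
  proof -
    interpret N: noisy_gradient "law n" g Dg DG c Mv
      using n by (rule noisy_gradient_law)
    have "(\<integral>\<^sup>+y. ennreal (lyapunov (hb_step alpha (eps n) DG s y)) \<partial>law n)
        \<le> ennreal (lyapunov s + (eps n)\<^sup>2 * q * (\<integral>y. (norm (DG (fst s) y))\<^sup>2 \<partial>law n))"
      using N.nn_integral_hb_lyapunov_step_le[OF alpha eps_nonneg[OF n] K_pos K_large[OF n]]
      by (simp add: q_def)
    also have "\<dots> \<le> ennreal ((1 + q * C * (eps n)\<^sup>2) * lyapunov s + q * (2 * Mv) * (eps n)\<^sup>2)"
    proof (rule ennreal_leI)
      have "(eps n)\<^sup>2 * q * (\<integral>y. (norm (DG (fst s) y))\<^sup>2 \<partial>law n) \<le> (eps n)\<^sup>2 * q * (C * lyapunov s + 2 * Mv)"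
        using N.integral_sq_norm_DG_le_hb_lyapunov[OF alpha K_pos, of s] q
        by (intro mult_left_mono) (simp_all add: C_def)
      then show "lyapunov s + (eps n)\<^sup>2 * q * (\<integral>y. (norm (DG (fst s) y))\<^sup>2 \<partial>law n)
          \<le> (1 + q * C * (eps n)\<^sup>2) * lyapunov s + q * (2 * Mv) * (eps n)\<^sup>2"
        by (simp add: algebra_simps)
    qed
    finally show ?thesis .
  qed
  then show thesis
    using q C Mv_pos by (intro that[of "q * C" "q * (2 * Mv)"]) auto
qed

lemma lyapunov_nonneg: "0 \<le> lyapunov s"
  using K_pos by (intro hb_lyapunov_nonneg g_nonneg) simp

lemma expected_lyapunov_recurrence:
  obtains a b where "0 \<le> a" "0 \<le> b"
    "\<And>m. (\<integral>\<^sup>+w. ennreal (lyapunov (state (Suc m) w)) \<partial>M)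
      \<le> ennreal (1 + a * (eps (Suc m))\<^sup>2) * (\<integral>\<^sup>+w. ennreal (lyapunov (state m w)) \<partial>M)
        + ennreal (b * (eps (Suc m))\<^sup>2)"
proof -
  obtain a b where ab: "0 \<le> a" "0 \<le> b" and step: "\<And>n s. n \<ge> 1 \<Longrightarrow>
      (\<integral>\<^sup>+y. ennreal (lyapunov (hb_step alpha (eps n) DG s y)) \<partial>law n)
        \<le> ennreal ((1 + a * (eps n)\<^sup>2) * lyapunov s + b * (eps n)\<^sup>2)"
    using conditional_lyapunov_step_le by blast
  note [measurable] = measurable_state measurable_lyapunov
  have "(\<integral>\<^sup>+w. ennreal (lyapunov (state (Suc m) w)) \<partial>M)
      \<le> ennreal (1 + a * (eps (Suc m))\<^sup>2) * (\<integral>\<^sup>+w. ennreal (lyapunov (state m w)) \<partial>M)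
        + ennreal (b * (eps (Suc m))\<^sup>2)" for m
  proof -
    have F: "(\<lambda>p. ennreal (lyapunov (hb_step alpha (eps (Suc m)) DG (fst p) (snd p)))) \<in> borel_measurable (borel \<Otimes>\<^sub>M S)"
      using measurable_compose[OF measurable_hb_step[OF DG_meas] measurable_lyapunov] by measurable
    have "(\<integral>\<^sup>+w. ennreal (lyapunov (state (Suc m) w)) \<partial>M)
        = (\<integral>\<^sup>+w. (\<integral>\<^sup>+y. ennreal (lyapunov (hb_step alpha (eps (Suc m)) DG (state m w) y)) \<partial>law (Suc m)) \<partial>M)"
      using nn_integral_state_next[OF F] by (simp add: hb_iter_Suc_eq_hb_step del: hb_iter.simps(2))
    also have "\<dots> \<le> (\<integral>\<^sup>+w. ennreal ((1 + a * (eps (Suc m))\<^sup>2) * lyapunov (state m w) + b * (eps (Suc m))\<^sup>2) \<partial>M)"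
      using step by (intro nn_integral_mono) simp
    also have "\<dots> = ennreal (1 + a * (eps (Suc m))\<^sup>2) * (\<integral>\<^sup>+w. ennreal (lyapunov (state m w)) \<partial>M)
        + ennreal (b * (eps (Suc m))\<^sup>2)"
      using ab lyapunov_nonneg by (intro nn_integral_affine) auto
    finally show ?thesis .
  qed
  with ab show thesis by (rule that)
qed

lemma expected_lyapunov_bounded:
  obtains B where "0 \<le> B" "\<And>m. (\<integral>\<^sup>+w. ennreal (lyapunov (state m w)) \<partial>M) \<le> ennreal B"
proof -
  define Ly where "Ly m = (\<integral>\<^sup>+w. ennreal (lyapunov (state m w)) \<partial>M)" for m
  obtain a b where ab: "0 \<le> a" "0 \<le> b"
    and recurrence: "\<And>m. Ly (Suc m) \<le> ennreal (1 + a * (eps (Suc m))\<^sup>2) * Ly m + ennreal (b * (eps (Suc m))\<^sup>2)"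
    unfolding Ly_def using expected_lyapunov_recurrence by blast
  have summable: "summable (\<lambda>m. r * (eps (Suc m))\<^sup>2)" for r
    using eps_sq summable_Suc_iff[of "\<lambda>n. (eps n)\<^sup>2"] by (intro summable_mult) simp
  define A Bs where "A = (\<Sum>i. a * (eps (Suc i))\<^sup>2)" and "Bs = (\<Sum>i. b * (eps (Suc i))\<^sup>2)"
  have "Ly m \<le> ennreal (exp A) * (Ly 0 + ennreal Bs)" for m
    unfolding A_def Bs_def using ab summable recurrence by (intro discrete_gronwall_ennreal_summable) auto
  moreover have "Ly 0 = ennreal (lyapunov (theta1, v0))"
    by (simp add: Ly_def emeasure_space_1)
  moreover have "0 \<le> Bs"
    using ab summable by (simp add: Bs_def suminf_nonneg)
  then have "ennreal (exp A) * (ennreal (lyapunov (theta1, v0)) + ennreal Bs)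
      = ennreal (exp A * (lyapunov (theta1, v0) + Bs))"
    using lyapunov_nonneg by (simp add: ennreal_mult)
  moreover have "0 \<le> exp A * (lyapunov (theta1, v0) + Bs)"
    using \<open>0 \<le> Bs\<close> lyapunov_nonneg by simp
  ultimately show thesis
    unfolding Ly_def by (intro that) simp_all
qed

lemma measurable_velocity: "(\<lambda>w. snd (state n w)) \<in> borel_measurable M"
  using measurable_compose[OF measurable_state[unfolded borel_prod[symmetric]] measurable_snd] .

lemma measurable_noisy_gradient_at_state: "(\<lambda>w. DG (fst (state m w)) (xi (Suc m) w)) \<in> borel_measurable M"
proof -
  have "(\<lambda>w. (state m w, xi (Suc m) w)) \<in> measurable M ((borel :: ('a \<times> 'a) measure) \<Otimes>\<^sub>M S)"
    using measurable_state xi_meas[of "Suc m"] by (intro measurable_Pair) auto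
  from measurable_compose[OF this measurable_DG_fst[OF DG_meas]] show ?thesis by simp
qed

lemma expected_sq_noisy_gradient_bounded:
  obtains D where "0 \<le> D"
    "\<And>m. (\<integral>\<^sup>+w. ennreal ((norm (DG (fst (state m w)) (xi (Suc m) w)))\<^sup>2) \<partial>M) \<le> ennreal D"
proof -
  obtain B where B: "0 \<le> B" "\<And>m. (\<integral>\<^sup>+w. ennreal (lyapunov (state m w)) \<partial>M) \<le> ennreal B"
    using expected_lyapunov_bounded by blast
  define C where "C = (4 * c + 2 * Mv) * (2 + c * (alpha / (1 - alpha))\<^sup>2 / K)"
  have C: "0 \<le> C" using c_pos Mv_pos K_pos by (simp add: C_def)
  note [measurable] = measurable_state measurable_lyapunov
  have "(\<integral>\<^sup>+w. ennreal ((norm (DG (fst (state m w)) (xi (Suc m) w)))\<^sup>2) \<partial>M) \<le> ennreal (C * B + 2 * Mv)" for m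
  proof -
    interpret N: noisy_gradient "law (Suc m)" g Dg DG c Mv
      by (rule noisy_gradient_law) simp
    have F: "(\<lambda>p. ennreal ((norm (DG (fst (fst p)) (snd p)))\<^sup>2)) \<in> borel_measurable ((borel :: ('a \<times> 'a) measure) \<Otimes>\<^sub>M S)"
      using measurable_DG_fst[OF DG_meas] by measurable
    have "(\<integral>\<^sup>+w. ennreal ((norm (DG (fst (state m w)) (xi (Suc m) w)))\<^sup>2) \<partial>M)
        = (\<integral>\<^sup>+w. (\<integral>\<^sup>+y. ennreal ((norm (DG (fst (state m w)) y))\<^sup>2) \<partial>law (Suc m)) \<partial>M)"
      using nn_integral_state_next[OF F] by simp
    also have "\<dots> \<le> (\<integral>\<^sup>+w. ennreal (C * lyapunov (state m w) + 2 * Mv) \<partial>M)"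
      using N.integral_sq_norm_DG_le_hb_lyapunov[OF alpha K_pos]
      by (intro nn_integral_mono) (simp add: nn_integral_eq_integral[OF N.integrable_sq_norm_DG] C_def ennreal_leI)
    also have "\<dots> = ennreal C * (\<integral>\<^sup>+w. ennreal (lyapunov (state m w)) \<partial>M) + ennreal (2 * Mv)"
      using C Mv_pos lyapunov_nonneg by (intro nn_integral_affine) auto
    also have "\<dots> \<le> ennreal C * ennreal B + ennreal (2 * Mv)"
      using B(2) by (intro add_right_mono mult_left_mono) auto
    also have "\<dots> = ennreal (C * B + 2 * Mv)"
      using C B(1) Mv_pos by (simp add: ennreal_mult)
    finally show ?thesis .
  qed
  then show thesis
    using C B(1) Mv_pos by (intro that[of "C * B + 2 * Mv"]) auto
qed

lemma expected_sq_velocity_step: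
  "(\<integral>\<^sup>+w. ennreal ((norm (snd (state (Suc m) w)))\<^sup>2) \<partial>M)
    \<le> ennreal alpha * (\<integral>\<^sup>+w. ennreal ((norm (snd (state m w)))\<^sup>2) \<partial>M)
      + ennreal ((eps (Suc m))\<^sup>2 / (1 - alpha))
        * (\<integral>\<^sup>+w. ennreal ((norm (DG (fst (state m w)) (xi (Suc m) w)))\<^sup>2) \<partial>M)"
proof -
  define e where "e = (eps (Suc m))\<^sup>2 / (1 - alpha)"
  have e: "0 \<le> e" using alpha by (simp add: e_def)
  note [measurable] = measurable_velocity measurable_noisy_gradient_at_state
  have "ennreal ((norm (snd (state (Suc m) w)))\<^sup>2)
      \<le> ennreal alpha * ennreal ((norm (snd (state m w)))\<^sup>2)
        + ennreal e * ennreal ((norm (DG (fst (state m w)) (xi (Suc m) w)))\<^sup>2)" for w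
  proof -
    have "(norm (snd (state (Suc m) w)))\<^sup>2
        \<le> alpha * (norm (snd (state m w)))\<^sup>2 + e * (norm (DG (fst (state m w)) (xi (Suc m) w)))\<^sup>2"
      using norm_sq_scaleR_add_le[OF alpha eps_nonneg, of "Suc m"]
      by (simp add: e_def hb_iter_Suc_eq_hb_step hb_step_def Let_def del: hb_iter.simps(2))
    then have "ennreal ((norm (snd (state (Suc m) w)))\<^sup>2)
        \<le> ennreal (alpha * (norm (snd (state m w)))\<^sup>2 + e * (norm (DG (fst (state m w)) (xi (Suc m) w)))\<^sup>2)"
      by (rule ennreal_leI)
    also have "\<dots> = ennreal alpha * ennreal ((norm (snd (state m w)))\<^sup>2)
        + ennreal e * ennreal ((norm (DG (fst (state m w)) (xi (Suc m) w)))\<^sup>2)"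
      using alpha e by (simp add: ennreal_mult)
    finally show ?thesis .
  qed
  then have "(\<integral>\<^sup>+w. ennreal ((norm (snd (state (Suc m) w)))\<^sup>2) \<partial>M)
      \<le> (\<integral>\<^sup>+w. ennreal alpha * ennreal ((norm (snd (state m w)))\<^sup>2)
        + ennreal e * ennreal ((norm (DG (fst (state m w)) (xi (Suc m) w)))\<^sup>2) \<partial>M)"
    by (intro nn_integral_mono) simp
  also have "\<dots> = ennreal alpha * (\<integral>\<^sup>+w. ennreal ((norm (snd (state m w)))\<^sup>2) \<partial>M)
      + ennreal e * (\<integral>\<^sup>+w. ennreal ((norm (DG (fst (state m w)) (xi (Suc m) w)))\<^sup>2) \<partial>M)"
    by (simp add: nn_integral_add nn_integral_cmult)
  finally show ?thesis by (simp add: e_def)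
qed

lemma suminf_expected_sq_velocity_finite:
  "(\<Sum>n. \<integral>\<^sup>+w. ennreal ((norm (hb_v alpha eps DG theta1 v0 xi w n))\<^sup>2) \<partial>M) < \<infinity>"
proof -
  obtain D where D: "0 \<le> D"
    "\<And>m. (\<integral>\<^sup>+w. ennreal ((norm (DG (fst (state m w)) (xi (Suc m) w)))\<^sup>2) \<partial>M) \<le> ennreal D"
    using expected_sq_noisy_gradient_bounded by blast
  define av where "av n = (\<integral>\<^sup>+w. ennreal ((norm (snd (state n w)))\<^sup>2) \<partial>M)" for n
  define b where "b m = (eps (Suc m))\<^sup>2 * D / (1 - alpha)" for m
  have b: "0 \<le> b m" for m using D alpha by (simp add: b_def)
  have "av (Suc m) \<le> ennreal alpha * av m + ennreal (b m)" for m
  proof -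
    have "ennreal ((eps (Suc m))\<^sup>2 / (1 - alpha))
        * (\<integral>\<^sup>+w. ennreal ((norm (DG (fst (state m w)) (xi (Suc m) w)))\<^sup>2) \<partial>M)
        \<le> ennreal ((eps (Suc m))\<^sup>2 / (1 - alpha)) * ennreal D"
      using D(2) by (rule mult_left_mono) simp
    also have "\<dots> = ennreal (b m)"
      using D alpha by (simp add: b_def ennreal_mult[symmetric])
    finally show ?thesis
      using expected_sq_velocity_step[of m] unfolding av_def by (meson add_left_mono order_trans)
  qed
  then have "ennreal (1 - alpha) * (\<Sum>n. av n) \<le> av 0 + (\<Sum>m. ennreal (b m))"
    by (rule suminf_contraction_ennreal_le[OF alpha])
  also have "(\<Sum>m. ennreal (b m)) = ennreal (\<Sum>m. b m)"
  proof (rule suminf_ennreal2[OF b])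
    show "summable b"
      unfolding b_def using eps_sq summable_Suc_iff[of "\<lambda>n. (eps n)\<^sup>2"]
      by (intro summable_divide summable_mult2) simp
  qed
  also have "av 0 = ennreal ((norm v0)\<^sup>2)"
    by (simp add: av_def emeasure_space_1)
  finally have "ennreal (1 - alpha) * (\<Sum>n. av n) < \<infinity>"
    by (simp add: le_less_trans flip: ennreal_plus)
  then have "(\<Sum>n. av n) < \<infinity>"
    using alpha by (auto simp: ennreal_mult_less_top)
  then show ?thesis
    by (simp add: av_def hb_v_def)
qed

lemma AE_summable_sq_velocity:
  "AE w in M. summable (\<lambda>n. (norm (hb_v alpha eps DG theta1 v0 xi w n))\<^sup>2)"
proof (rule AE_summable_of_suminf_nn_integral_finite[OF _ _ suminf_expected_sq_velocity_finite])
  show "(\<lambda>w. (norm (hb_v alpha eps DG theta1 v0 xi w n))\<^sup>2) \<in> borel_measurable M" for n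
    using measurable_velocity[of n] unfolding hb_v_def by measurable
qed simp

end

theorem lemma7:
  fixes M :: "'w measure" and S :: "'b measure"
    and xi :: "nat \<Rightarrow> 'w \<Rightarrow> 'b"
    and g :: "'a::euclidean_space \<Rightarrow> real" and Dg :: "'a \<Rightarrow> 'a"
    and G :: "'a \<Rightarrow> 'b \<Rightarrow> real" and DG :: "'a \<Rightarrow> 'b \<Rightarrow> 'a"
    and theta1 v0 :: 'a and alpha c Mv :: real and eps :: "nat \<Rightarrow> real"
  assumes P: "prob_space M"
    and xi_meas: "\<And>n. n \<ge> 1 \<Longrightarrow> xi n \<in> measurable M S"
    and G_meas: "(\<lambda>(th, x). G th x) \<in> borel_measurable (borel \<Otimes>\<^sub>M S)"
    and DG_meas: "(\<lambda>(th, x). DG th x) \<in> borel_measurable (borel \<Otimes>\<^sub>M S)"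
    and G_diff: "\<And>th x. x \<in> space S \<Longrightarrow>
        ((\<lambda>t. G t x) has_derivative (\<lambda>h. DG th x \<bullet> h)) (at th)"
    \<comment> \<open>(i)\<close>
    and indep: "prob_space.indep_vars M (\<lambda>_. S) xi {1..}"
    and G_int: "\<And>n x. n \<ge> 1 \<Longrightarrow> integrable (distr M S (xi n)) (G x)"
    and g_mean: "\<And>n x. n \<ge> 1 \<Longrightarrow> g x = (\<integral>y. G x y \<partial>distr M S (xi n))"
    and DG_int: "\<And>n x. n \<ge> 1 \<Longrightarrow> integrable (distr M S (xi n)) (DG x)"
    and Dg_mean: "\<And>n x. n \<ge> 1 \<Longrightarrow> Dg x = (\<integral>y. DG x y \<partial>distr M S (xi n))"
    \<comment> \<open>(ii)\<close>
    and g_nonneg: "\<And>x. g x \<ge> 0"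
    and g_diff: "\<And>x. (g has_derivative (\<lambda>h. Dg x \<bullet> h)) (at x)"
    and Dg_cont: "continuous_on UNIV Dg"
    and crit: "{th. Dg th = 0} \<noteq> {}"
    and c_pos: "c > 0"
    and Lip: "\<And>x y. norm (Dg x - Dg y) \<le> c * norm (x - y)"
    and Mv_pos: "Mv > 0"
    and var: "\<And>n th. n \<ge> 1 \<Longrightarrow>
        (\<integral>\<^sup>+ y. ennreal ((norm (Dg th - DG th y))\<^sup>2) \<partial>distr M S (xi n))
          \<le> ennreal (Mv * (1 + g th))"
    \<comment> \<open>(iii)\<close>
    and alpha: "0 \<le> alpha" "alpha < 1"
    and eps_pos: "\<And>n. n \<ge> 1 \<Longrightarrow> eps n > 0"
    and eps_mono: "\<And>m n. 1 \<le> m \<Longrightarrow> m \<le> n \<Longrightarrow> eps n \<le> eps m"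
    and eps_lim: "eps \<longlonglongrightarrow> 0"
    and eps_nsum: "\<not> summable eps"
    and eps_sq: "summable (\<lambda>n. (eps n)\<^sup>2)"
  shows "\<exists>C::real.
      (\<Sum>n. \<integral>\<^sup>+ w. ennreal ((norm (hb_v alpha eps DG theta1 v0 xi w n))\<^sup>2) \<partial>M) < ennreal C
    \<and> (AE w in M. summable (\<lambda>n. (norm (hb_v alpha eps DG theta1 v0 xi w n))\<^sup>2))"
proof -
  define K where "K = eps 1 * c\<^sup>2 * (alpha / (1 - alpha))\<^sup>2 / (4 * (1 - alpha)\<^sup>2) + 1"
  interpret heavy_ball M S xi g Dg DG c Mv alpha K eps theta1 v0
  proof (intro heavy_ball.intro heavy_ball_axioms.intro P)
    show "K > 0"
      using eps_pos[of 1] alpha by (simp add: K_def add_nonneg_pos)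
    show "eps n * c\<^sup>2 * (alpha / (1 - alpha))\<^sup>2 \<le> 4 * K * (1 - alpha)\<^sup>2" if "n \<ge> 1" for n
    proof -
      have "eps n * c\<^sup>2 * (alpha / (1 - alpha))\<^sup>2 \<le> eps 1 * c\<^sup>2 * (alpha / (1 - alpha))\<^sup>2"
        using eps_mono[OF order_refl that] by (simp add: mult_right_mono)
      also have "\<dots> \<le> 4 * K * (1 - alpha)\<^sup>2"
        using alpha by (simp add: K_def field_simps)
      finally show ?thesis .
    qed
  qed (fact xi_meas DG_meas indep DG_int Dg_mean var g_nonneg g_diff Lip c_pos Mv_pos alpha eps_sq
      less_imp_le[OF eps_pos])+
  obtain r where "(\<Sum>n. \<integral>\<^sup>+ w. ennreal ((norm (hb_v alpha eps DG theta1 v0 xi w n))\<^sup>2) \<partial>M) = ennreal r" "0 \<le> r"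
    using suminf_expected_sq_velocity_finite by (auto simp: less_top_ennreal)
  then show ?thesis
    using AE_summable_sq_velocity by (intro exI[of _ "r + 1"]) (simp add: ennreal_lessI)
qed

end
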